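(* Let $G$ be a locally compact group with compact topological commutator subgroup $C=\overline{[G,G]}$, with $G/C$, $K$, $R$, $U$, $H$, $D$ as described below. Then the approximate block diagonals $\bigcup_{hk^{-1}\in lU}(hU\times kU)$ ($l\in H$, union over $h,k\in H$) are exactly the block diagonals $\bigcup_{\dot h\dot k^{-1}=\dot l}(\dot hU\times\dot kU)$ ($\dot l\in D$).
   Context: Let $p_C:G\to G/C$ be the quotient map. $G/C$ is locally compact abelian, identified with $\mathbb{R}^d\times J$ where $d\ge0$ and $J$ has a compact open subgroup $K$. Let $R\subset J$ be a complete set of representatives of $J/K$, $U=p_C^{-1}([-\tfrac12,\tfrac12)^d\times K)$, and $H\subset G$ a complete set of representatives (under $p_C$) of $\mathbb{Z}^d\times R\subset G/C$. Let $D=\mathbb{Z}^d\times J/K$ and for $g\in G$ let $\dot g=(\mathrm{id}\times p_K)(p_C(g))\in\mathbb{R}^d\times J/K$, where $p_K:J\to J/K$; $h\mapsto\dot h$ is a bijection $H\to D$ and $\dot hU$ denotes $hU$. *)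

theory Defs
  imports "HOL-Analysis.Analysis" "HOL-Algebra.Algebra"
begin

definition topological_group :: "('a, 'b) monoid_scheme \<Rightarrow> 'a topology \<Rightarrow> bool" where
  "topological_group G T \<longleftrightarrow> group G \<and> topspace T = carrier G \<and> Hausdorff_space T \<and>
     continuous_map (prod_topology T T) T (\<lambda>(x, y). x \<otimes>\<^bsub>G\<^esub> y) \<and>
     continuous_map T T (\<lambda>x. inv\<^bsub>G\<^esub> x)"

definition locally_compact_group :: "('a, 'b) monoid_scheme \<Rightarrow> 'a topology \<Rightarrow> bool" where
  "locally_compact_group G T \<longleftrightarrow> topological_group G T \<and> locally_compact_space T"

definition top_commutator :: "('a, 'b) monoid_scheme \<Rightarrow> 'a topology \<Rightarrow> 'a set" where
  "top_commutator G T = T closure_of (derived G (carrier G))"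

text \<open>The group R^d (additive), realised as extensional functions on {..<d}.\<close>
definition Rd :: "nat \<Rightarrow> (nat \<Rightarrow> real) set" where
  "Rd d = PiE {..<d} (\<lambda>_. UNIV)"

definition Rd_top :: "nat \<Rightarrow> (nat \<Rightarrow> real) topology" where
  "Rd_top d = product_topology (\<lambda>_. euclideanreal) {..<d}"

definition Rd_add :: "nat \<Rightarrow> (nat \<Rightarrow> real) \<Rightarrow> (nat \<Rightarrow> real) \<Rightarrow> (nat \<Rightarrow> real)" where
  "Rd_add d x y = (\<lambda>i\<in>{..<d}. x i + y i)"

definition Rd_diff :: "nat \<Rightarrow> (nat \<Rightarrow> real) \<Rightarrow> (nat \<Rightarrow> real) \<Rightarrow> (nat \<Rightarrow> real)" where
  "Rd_diff d x y = (\<lambda>i\<in>{..<d}. x i - y i)"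

definition Zd :: "nat \<Rightarrow> (nat \<Rightarrow> real) set" where
  "Zd d = PiE {..<d} (\<lambda>_. \<int>)"

text \<open>The map p_C : G \<rightarrow> G/C = R^d \<times> J, given as a pair (pR, pJ). The hypothesis
  that G/C is identified (as a topological group) with R^d \<times> J is expressed by: the map
  g \<mapsto> (pR g, pJ g) is a continuous open surjective homomorphism onto R^d \<times> J with kernel C.\<close>
definition quotient_identification ::
  "('a, 'b) monoid_scheme \<Rightarrow> 'a topology \<Rightarrow> 'a set \<Rightarrow> nat \<Rightarrow> ('j, 'c) monoid_scheme \<Rightarrow> 'j topology
   \<Rightarrow> ('a \<Rightarrow> nat \<Rightarrow> real) \<Rightarrow> ('a \<Rightarrow> 'j) \<Rightarrow> bool" where
  "quotient_identification G T C d J TJ pR pJ \<longleftrightarrow>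
     (\<forall>g\<in>carrier G. pR g \<in> Rd d \<and> pJ g \<in> carrier J) \<and>
     (\<forall>x\<in>carrier G. \<forall>y\<in>carrier G. pR (x \<otimes>\<^bsub>G\<^esub> y) = Rd_add d (pR x) (pR y) \<and>
                                     pJ (x \<otimes>\<^bsub>G\<^esub> y) = pJ x \<otimes>\<^bsub>J\<^esub> pJ y) \<and>
     (\<lambda>g. (pR g, pJ g)) ` carrier G = Rd d \<times> carrier J \<and>
     {g \<in> carrier G. pR g = (\<lambda>i\<in>{..<d}. 0) \<and> pJ g = \<one>\<^bsub>J\<^esub>} = C \<and>
     continuous_map T (prod_topology (Rd_top d) TJ) (\<lambda>g. (pR g, pJ g)) \<and>
     open_map T (prod_topology (Rd_top d) TJ) (\<lambda>g. (pR g, pJ g))"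

definition Uset :: "('a, 'b) monoid_scheme \<Rightarrow> nat \<Rightarrow> 'j set \<Rightarrow> ('a \<Rightarrow> nat \<Rightarrow> real) \<Rightarrow> ('a \<Rightarrow> 'j) \<Rightarrow> 'a set" where
  "Uset G d K pR pJ = {g \<in> carrier G. (\<forall>i<d. -1/2 \<le> pR g i \<and> pR g i < 1/2) \<and> pJ g \<in> K}"

text \<open>\<open>dot g\<close> = (id \<times> p_K)(p_C g) \<in> R^d \<times> J/K, with J/K the quotient group \<open>J Mod K\<close>.\<close>
definition dotmap :: "('j, 'c) monoid_scheme \<Rightarrow> 'j set \<Rightarrow> ('a \<Rightarrow> nat \<Rightarrow> real) \<Rightarrow> ('a \<Rightarrow> 'j) \<Rightarrow> 'a \<Rightarrow> (nat \<Rightarrow> real) \<times> 'j set" where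
  "dotmap J K pR pJ g = (pR g, K #>\<^bsub>J\<^esub> pJ g)"

definition D_div :: "nat \<Rightarrow> ('j, 'c) monoid_scheme \<Rightarrow> 'j set \<Rightarrow> (nat \<Rightarrow> real) \<times> 'j set \<Rightarrow> (nat \<Rightarrow> real) \<times> 'j set \<Rightarrow> (nat \<Rightarrow> real) \<times> 'j set" where
  "D_div d J K x y = (Rd_diff d (fst x) (fst y),
                      snd x \<otimes>\<^bsub>J Mod K\<^esub> inv\<^bsub>J Mod K\<^esub> (snd y))"

end

theory Submission
  imports Defs
begin

text \<open>Put \<open>g = l\<inverse> h k\<inverse>\<close>, so that
  \<open>h k\<inverse> \<in> lU\<close> iff \<open>g \<in> U\<close>, i.e. iff the \<open>\<real>\<^sup>d\<close>-component of \<open>p\<^sub>C g\<close> lies in \<open>[-1/2,1/2)\<^sup>d\<close>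
  and its \<open>J\<close>-component lies in \<open>K\<close>. For \<open>h, k, l \<in> H\<close> that \<open>\<real>\<^sup>d\<close>-component is an integer
  vector, so the first condition says it vanishes, which is the \<open>\<int>\<^sup>d\<close>-part of
  \<open>\<dot>h \<dot>k\<inverse> = \<dot>l\<close>; the second condition is the \<open>J/K\<close>-part. Hence both unions run over
  the same pairs \<open>(h, k)\<close>.\<close>

lemma Ints_eq_0_if_half_open_bounds:
  fixes x :: real
  assumes "x \<in> \<int>" "-1/2 \<le> x" "x < 1/2"
  shows "x = 0"
proof -
  obtain n where n: "x = of_int n" using assms(1) Ints_cases by blast
  then have "n \<ge> 0" "n \<le> 0" using assms by linarith+
  then show ?thesis using n by simp
qed

lemma Rd_diff_eq_iff_half_open_box:
  assumes "x \<in> Zd d" "y \<in> Zd d" "z \<in> Zd d"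
  shows "Rd_diff d x y = z \<longleftrightarrow> (\<forall>i<d. -1/2 \<le> x i - y i - z i \<and> x i - y i - z i < 1/2)"
proof
  assume "Rd_diff d x y = z"
  then have "x i - y i = z i" if "i < d" for i
    using that unfolding Rd_diff_def by (metis lessThan_iff restrict_apply')
  then show "\<forall>i<d. -1/2 \<le> x i - y i - z i \<and> x i - y i - z i < 1/2" by simp
next
  assume box: "\<forall>i<d. -1/2 \<le> x i - y i - z i \<and> x i - y i - z i < 1/2"
  have "x i - y i - z i \<in> \<int>" if "i < d" for i
    using assms that unfolding Zd_def by (intro Ints_diff) (auto simp: PiE_iff)
  then have "x i - y i = z i" if "i < d" for i
    using Ints_eq_0_if_half_open_bounds box that by fastforce
  moreover have "z \<in> extensional {..<d}" using assms(3) unfolding Zd_def by (simp add: PiE_iff)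
  ultimately show "Rd_diff d x y = z"
    unfolding Rd_diff_def by (auto simp: extensional_def fun_eq_iff)
qed

lemma (in group) l_coset_mem_iff:
  assumes "U \<subseteq> carrier G" "l \<in> carrier G" "x \<in> carrier G"
  shows "x \<in> l <# U \<longleftrightarrow> inv l \<otimes> x \<in> U"
proof
  assume "x \<in> l <# U"
  then obtain u where "u \<in> U" "x = l \<otimes> u" unfolding l_coset_def by auto
  then show "inv l \<otimes> x \<in> U" using assms by (metis inv_solve_left' subsetD)
next
  assume "inv l \<otimes> x \<in> U"
  moreover have "x = l \<otimes> (inv l \<otimes> x)" using assms by (simp add: m_assoc [symmetric])
  ultimately show "x \<in> l <# U" unfolding l_coset_def by auto
qed

lemma (in subgroup) rcos_eq_iff:
  assumes "group G" "x \<in> carrier G" "y \<in> carrier G"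
  shows "H #> x = H #> y \<longleftrightarrow> x \<otimes> inv y \<in> H"
  using rcos_module[OF assms(1,3,2)] group.repr_independence[OF assms(1) _ assms(3)]
    group.rcos_self[OF assms(1,2)] subgroup_axioms
  by metis

lemma (in normal) FactGroup_div_eq_iff:
  assumes "a \<in> carrier G" "b \<in> carrier G" "c \<in> carrier G"
  shows "(H #> a) \<otimes>\<^bsub>G Mod H\<^esub> inv\<^bsub>G Mod H\<^esub> (H #> c) = H #> b \<longleftrightarrow> a \<otimes> inv c \<otimes> inv b \<in> H"
proof -
  have "H #> c \<in> carrier (G Mod H)"
    using assms(3) unfolding FactGroup_def RCOSETS_def by auto
  then have "(H #> a) \<otimes>\<^bsub>G Mod H\<^esub> inv\<^bsub>G Mod H\<^esub> (H #> c) = H #> (a \<otimes> inv c)"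
    using assms by (simp add: inv_FactGroup rcos_inv rcos_sum)
  then show ?thesis using rcos_eq_iff[OF is_group] assms by simp
qed

lemma quotient_identification_pR_mult:
  assumes "quotient_identification G T C d J TJ pR pJ"
    and "x \<in> carrier G" "y \<in> carrier G" "i < d"
  shows "pR (x \<otimes>\<^bsub>G\<^esub> y) i = pR x i + pR y i"
  using assms unfolding quotient_identification_def Rd_add_def by simp

lemma quotient_identification_pR_inv:
  assumes "group G" "quotient_identification G T C d J TJ pR pJ"
    and "x \<in> carrier G" "i < d"
  shows "pR (inv\<^bsub>G\<^esub> x) i = - pR x i"
proof -
  interpret group G by fact
  have "pR \<one>\<^bsub>G\<^esub> i = pR \<one>\<^bsub>G\<^esub> i + pR \<one>\<^bsub>G\<^esub> i"
    using quotient_identification_pR_mult[OF assms(2) one_closed one_closed assms(4)] by simp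
  moreover have "pR \<one>\<^bsub>G\<^esub> i = pR x i + pR (inv\<^bsub>G\<^esub> x) i"
    using quotient_identification_pR_mult[OF assms(2,3) inv_closed[OF assms(3)] assms(4)] assms(3) by simp
  ultimately show ?thesis by simp
qed

lemma quotient_identification_pJ_hom:
  assumes "quotient_identification G T C d J TJ pR pJ"
  shows "pJ \<in> hom G J"
  using assms unfolding quotient_identification_def hom_def by auto

lemma mult_inv_mem_l_coset_Uset_iff_D_div_eq:
  assumes "group G" "comm_group J" "subgroup K J"
    and pC: "quotient_identification G T C d J TJ pR pJ"
    and "h \<in> carrier G" "k \<in> carrier G" "l \<in> carrier G"
    and "pR h \<in> Zd d" "pR k \<in> Zd d" "pR l \<in> Zd d"
  shows "h \<otimes>\<^bsub>G\<^esub> inv\<^bsub>G\<^esub> k \<in> l <#\<^bsub>G\<^esub> Uset G d K pR pJ \<longleftrightarrow>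
    D_div d J K (dotmap J K pR pJ h) (dotmap J K pR pJ k) = dotmap J K pR pJ l"
proof -
  interpret G: group G by fact
  interpret J: comm_group J by fact
  interpret K: normal K J using J.subgroup_imp_normal[OF \<open>subgroup K J\<close>] .
  interpret pJ: group_hom G J pJ
    using quotient_identification_pJ_hom[OF pC] by unfold_locales
  define g where "g = inv\<^bsub>G\<^esub> l \<otimes>\<^bsub>G\<^esub> (h \<otimes>\<^bsub>G\<^esub> inv\<^bsub>G\<^esub> k)"
  have g: "g \<in> carrier G" unfolding g_def using assms by simp
  have pR_g: "pR g i = pR h i - pR k i - pR l i" if "i < d" for i
    unfolding g_def using assms that
    by (simp add: quotient_identification_pR_mult[OF pC] quotient_identification_pR_inv[OF _ pC])
  have pJ_g: "pJ g = pJ h \<otimes>\<^bsub>J\<^esub> inv\<^bsub>J\<^esub> pJ k \<otimes>\<^bsub>J\<^esub> inv\<^bsub>J\<^esub> pJ l"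
    unfolding g_def using assms by (simp add: pJ.hom_inv J.m_comm)
  have "h \<otimes>\<^bsub>G\<^esub> inv\<^bsub>G\<^esub> k \<in> l <#\<^bsub>G\<^esub> Uset G d K pR pJ \<longleftrightarrow> g \<in> Uset G d K pR pJ"
    unfolding g_def using assms by (intro G.l_coset_mem_iff) (auto simp: Uset_def)
  also have "\<dots> \<longleftrightarrow> (\<forall>i<d. -1/2 \<le> pR g i \<and> pR g i < 1/2) \<and> pJ g \<in> K"
    unfolding Uset_def using g by simp
  also have "\<dots> \<longleftrightarrow> D_div d J K (dotmap J K pR pJ h) (dotmap J K pR pJ k) = dotmap J K pR pJ l"
  proof -
    have "(\<forall>i<d. -1/2 \<le> pR g i \<and> pR g i < 1/2) \<longleftrightarrow> Rd_diff d (pR h) (pR k) = pR l"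
      using Rd_diff_eq_iff_half_open_box assms pR_g by simp
    moreover have "pJ g \<in> K \<longleftrightarrow>
        (K #>\<^bsub>J\<^esub> pJ h) \<otimes>\<^bsub>J Mod K\<^esub> inv\<^bsub>J Mod K\<^esub> (K #>\<^bsub>J\<^esub> pJ k) = K #>\<^bsub>J\<^esub> pJ l"
      using K.FactGroup_div_eq_iff[of "pJ h" "pJ l" "pJ k"] pJ_g assms by simp
    ultimately show ?thesis unfolding D_div_def dotmap_def by simp
  qed
  finally show ?thesis .
qed

theorem mainTheorem7:
  fixes G :: "('a, 'b) monoid_scheme" and T :: "'a topology"
    and J :: "('j, 'c) monoid_scheme" and TJ :: "'j topology"
    and C U H :: "'a set" and K R :: "'j set" and d :: nat
    and pR :: "'a \<Rightarrow> nat \<Rightarrow> real" and pJ :: "'a \<Rightarrow> 'j"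
  assumes LCG: "locally_compact_group G T"
    and C_def: "C = top_commutator G T"
    and C_compact: "compactin T C"
    and J_LCA: "locally_compact_group J TJ" and J_abelian: "comm_group J"
    and pC: "quotient_identification G T C d J TJ pR pJ"
    and K_sub: "subgroup K J" and K_compact: "compactin TJ K" and K_open: "openin TJ K"
    and R_sub: "R \<subseteq> carrier J"
    and R_reps: "\<forall>j\<in>carrier J. \<exists>!r\<in>R. j \<in> K #>\<^bsub>J\<^esub> r"
    and U_def: "U = Uset G d K pR pJ"
    and H_sub: "H \<subseteq> carrier G"
    and H_reps: "bij_betw (\<lambda>h. (pR h, pJ h)) H (Zd d \<times> R)"
  shows "\<forall>l\<in>H.
     (\<Union>{(h <#\<^bsub>G\<^esub> U) \<times> (k <#\<^bsub>G\<^esub> U) | h k. h \<in> H \<and> k \<in> H \<and>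
            h \<otimes>\<^bsub>G\<^esub> inv\<^bsub>G\<^esub> k \<in> l <#\<^bsub>G\<^esub> U})
   = (\<Union>{(h <#\<^bsub>G\<^esub> U) \<times> (k <#\<^bsub>G\<^esub> U) | h k. h \<in> H \<and> k \<in> H \<and>
            D_div d J K (dotmap J K pR pJ h) (dotmap J K pR pJ k) = dotmap J K pR pJ l})"
proof
  fix l assume "l \<in> H"
  have "group G" using LCG unfolding locally_compact_group_def topological_group_def by blast
  have H_Zd: "pR h \<in> Zd d" if "h \<in> H" for h
    using bij_betw_imp_surj_on[OF H_reps] that by auto
  have "h \<otimes>\<^bsub>G\<^esub> inv\<^bsub>G\<^esub> k \<in> l <#\<^bsub>G\<^esub> U \<longleftrightarrow>
      D_div d J K (dotmap J K pR pJ h) (dotmap J K pR pJ k) = dotmap J K pR pJ l"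
    if "h \<in> H" "k \<in> H" for h k
    unfolding U_def using \<open>l \<in> H\<close> that H_sub
    by (intro mult_inv_mem_l_coset_Uset_iff_D_div_eq[OF \<open>group G\<close> J_abelian K_sub pC])
      (auto intro: H_Zd)
  then have "{(h <#\<^bsub>G\<^esub> U) \<times> (k <#\<^bsub>G\<^esub> U) | h k. h \<in> H \<and> k \<in> H \<and>
            h \<otimes>\<^bsub>G\<^esub> inv\<^bsub>G\<^esub> k \<in> l <#\<^bsub>G\<^esub> U}
        = {(h <#\<^bsub>G\<^esub> U) \<times> (k <#\<^bsub>G\<^esub> U) | h k. h \<in> H \<and> k \<in> H \<and>
            D_div d J K (dotmap J K pR pJ h) (dotmap J K pR pJ k) = dotmap J K pR pJ l}"
    by blast
  then show "\<Union>{(h <#\<^bsub>G\<^esub> U) \<times> (k <#\<^bsub>G\<^esub> U) | h k. h \<in> H \<and> k \<in> H \<and>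
            h \<otimes>\<^bsub>G\<^esub> inv\<^bsub>G\<^esub> k \<in> l <#\<^bsub>G\<^esub> U}
        = \<Union>{(h <#\<^bsub>G\<^esub> U) \<times> (k <#\<^bsub>G\<^esub> U) | h k. h \<in> H \<and> k \<in> H \<and>
            D_div d J K (dotmap J K pR pJ h) (dotmap J K pR pJ k) = dotmap J K pR pJ l}"
    by simp
qed

end
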